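(* Let $0<q<1$, $N\in\{\tfrac12,1,\tfrac32,2,\dots\}$, $n\in\{0,1,\dots,\lfloor N\rfloor\}$, and $\alpha\in\mathbb{C}$ with $\pm q\alpha, q^2\alpha^2\notin\{q^{-j}:j\in\mathbb{Z}_{\ge0}\}$. Then for all $x\in\mathbb{C}$: $${}_4\phi_3\!\left(\begin{matrix}q^{-2n-1},\alpha^2q^{2n+2},q^{-x-N-\frac12},-q^{x-N-\frac12}\\ q\alpha,-q\alpha,q^{-2N-1}\end{matrix};q,q\right)=\frac{q^{-x-N-\frac12}-q^{x-N-\frac12}}{1-q^{-2N-1}}\;{}_4\phi_3\!\left(\begin{matrix}q^{-2n},\alpha^2q^{2n+3},q^{-2x-2N-1},q^{2x-2N-1}\\ q^2\alpha^2,q^{-2N+1},q^{-2N}\end{matrix};q^2,q^2\right).$$ (Equivalently, $R_{2n+1}(q^{-x-N-\frac12}-q^{x-N-\frac12};\alpha,\alpha,q^{-2N-2},-1\,|\,q)=\frac{q^{-x-N-\frac12}-q^{x-N-\frac12}}{1-q^{-2N-1}}R_n(q^{-2x-2N-1}+q^{2x-2N-1};\alpha^2,q,q^{-2N-2},q^{-2N-2}\,|\,q^2)$.)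
   Context: $(x;q)_k=\prod_{j=0}^{k-1}(1-xq^j)$. ${}_4\phi_3\!\left(\begin{matrix}a_1,\dots,a_4\\ b_1,b_2,b_3\end{matrix};q,z\right)=\sum_{k\ge0}\frac{(a_1,\dots,a_4;q)_k}{(b_1,b_2,b_3,q;q)_k}z^k$, terminating here because of the numerator $q^{-2n-1}$ (base $q$) resp. $q^{-2n}$ (base $q^2$). $q$-Racah polynomials: $R_n(q^{-y}+\gamma\delta q^{y+1};\alpha,\beta,\gamma,\delta\,|\,q)={}_4\phi_3(q^{-n},\alpha\beta q^{n+1},q^{-y},\gamma\delta q^{y+1};\alpha q,\beta\delta q,\gamma q;q,q)$. *)

theory Defs
  imports Complex_Main
begin

definition qpoch :: "complex \<Rightarrow> complex \<Rightarrow> nat \<Rightarrow> complex" where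
  "qpoch x q k = (\<Prod>j<k. (1 - x * q ^ j))"

definition cqpow :: "real \<Rightarrow> complex \<Rightarrow> complex" where
  "cqpow q z = exp (z * of_real (ln q))"

text \<open>Terminating 4phi3 whose first numerator parameter is p^(-m) (base p):
  the series is summed over k = 0..m; all further terms vanish since
  (p^(-m);p)_k = 0 for k > m.\<close>
definition phi43_term :: "nat \<Rightarrow> complex \<Rightarrow> complex \<Rightarrow> complex \<Rightarrow> complex \<Rightarrow> complex
    \<Rightarrow> complex \<Rightarrow> complex \<Rightarrow> complex \<Rightarrow> complex" where
  "phi43_term m a2 a3 a4 b1 b2 b3 p z =
     (\<Sum>k\<le>m. (qpoch (inverse (p ^ m)) p k * qpoch a2 p k * qpoch a3 p k * qpoch a4 p k)
             / (qpoch b1 p k * qpoch b2 p k * qpoch b3 p k * qpoch p p k) * z ^ k)"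

end

theory Submission
  imports Defs "HOL-Computational_Algebra.Polynomial"
begin

text \<open>
  Write \<open>v = q\<^bsup>-x-N-1/2\<^esup>\<close> and \<open>c = q\<^bsup>-2N-1\<^esup>\<close>. The left-hand side is
  \<open>\<Sum>\<^sub>k a\<^sub>k (v;q)\<^sub>k (-c/v;q)\<^sub>k\<close>, the right-hand side is
  \<open>\<Sum>\<^sub>j b\<^sub>j (v - c/v) (v\<^sup>2;q\<^sup>2)\<^sub>j (c\<^sup>2/v\<^sup>2;q\<^sup>2)\<^sub>j / (1 - c)\<close>, and both are polynomials
  of degree at most \<open>2n+1\<close> in \<open>u = v - c/v\<close>. On each of the two bases the q-Racah
  difference operator in \<open>v\<close> acts lower bidiagonally, with diagonal entries \<open>\<lambda>\<^sub>k\<close> resp.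
  \<open>\<lambda>\<^sub>2\<^sub>j\<^sub>+\<^sub>1\<close>, and the \<open>\<^sub>4\<phi>\<^sub>3\<close> coefficients are exactly the solutions of the resulting
  two-term recurrences; hence both sides are eigenfunctions with eigenvalue \<open>\<lambda>\<^sub>2\<^sub>n\<^sub>+\<^sub>1\<close>.
  On the grid \<open>v = q\<^sup>-\<^sup>j\<close> the eigenvalue equation is a three-term recurrence whose
  backward coefficient vanishes at \<open>v = 1\<close>, so an eigenfunction vanishing at \<open>v = 1\<close>
  vanishes at \<open>q\<^sup>0, \<dots>, q\<^bsup>-2n-1\<^esup>\<close>. Both sides equal \<open>1\<close> at \<open>v = 1\<close>, so their
  difference is a polynomial in \<open>u\<close> of degree at most \<open>2n+1\<close> with \<open>2n+2\<close> distinct roots.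
\<close>

lemma qpoch_0 [simp]: "qpoch x p 0 = 1"
  by (simp add: qpoch_def)

lemma qpoch_1 [simp]: "qpoch x p (Suc 0) = 1 - x"
  by (simp add: qpoch_def)

lemma qpoch_Suc: "qpoch x p (Suc k) = qpoch x p k * (1 - x * p ^ k)"
  by (simp add: qpoch_def)

lemma qpoch_Suc_shift: "qpoch x p (Suc k) = (1 - x) * qpoch (x * p) p k"
  unfolding qpoch_def prod.lessThan_Suc_shift by (simp add: mult.assoc)

section \<open>The q-Racah difference operator\<close>

text \<open>
  The operator \<open>A(v) (f(qv) - f(v)) + A(-c/v) (f(v/q) - f(v))\<close> with
  \<open>A(v) = (1 - v\<^sup>2)(1 - q\<^sup>2\<alpha>\<^sup>2v\<^sup>2/c\<^sup>2) / ((1 + v\<^sup>2/c)(1 + qv\<^sup>2/c))\<close>,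
  multiplied by the common denominator \<open>racah_weight\<close>; so \<open>f\<close> is an eigenfunction with
  eigenvalue \<open>\<lambda>\<close> iff \<open>racah_op f = \<lambda> \<cdot> racah_weight \<cdot> f\<close>.
\<close>
definition racah_op :: "complex \<Rightarrow> complex \<Rightarrow> complex \<Rightarrow> (complex \<Rightarrow> complex) \<Rightarrow> complex \<Rightarrow> complex" where
  "racah_op q c \<alpha> f v =
     (1 - v^2) * (c^2 - q^2 * \<alpha>^2 * v^2) * (v^2 + q * c) * (f (q * v) - f v)
   + (v^2 - c^2) * (v^2 - q^2 * \<alpha>^2) * (c + q * v^2) * (f (v / q) - f v)"

definition racah_weight :: "complex \<Rightarrow> complex \<Rightarrow> complex \<Rightarrow> complex" where
  "racah_weight q c v = (c + v^2) * (c + q * v^2) * (v^2 + q * c)"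

lemma racah_op_sum:
  "racah_op q c \<alpha> (\<lambda>w. \<Sum>k\<le>m. a k * G k w) v = (\<Sum>k\<le>m. a k * racah_op q c \<alpha> (G k) v)"
  unfolding racah_op_def by (simp add: algebra_simps sum.distrib sum_subtractf sum_distrib_left)

lemma racah_op_diff:
  "racah_op q c \<alpha> (\<lambda>w. f w - g w) v = racah_op q c \<alpha> f v - racah_op q c \<alpha> g v"
  unfolding racah_op_def by (simp add: algebra_simps)

lemma racah_op_scale:
  "racah_op q c \<alpha> (\<lambda>w. s * f w) v = s * racah_op q c \<alpha> f v"
  unfolding racah_op_def by (simp add: algebra_simps)

lemma racah_op_eq_from_values:
  assumes "f (q * v) = Y * Fp" "f v = Y * F0" "f (v / q) = Y * Fm" "g v = Y * G"
    and "D \<noteq> 0" "lam * D = L" "mu * D = M"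
    and key: "D * ((1 - v^2) * (c^2 - q^2 * \<alpha>^2 * v^2) * (v^2 + q * c) * (Fp - F0)
           + (v^2 - c^2) * (v^2 - q^2 * \<alpha>^2) * (c + q * v^2) * (Fm - F0))
         = racah_weight q c v * (L * F0 + M * G)"
  shows "racah_op q c \<alpha> f v = racah_weight q c v * (lam * f v + mu * g v)"
proof -
  have "D * racah_op q c \<alpha> f v = Y * (racah_weight q c v * (L * F0 + M * G))"
    unfolding key[symmetric] racah_op_def assms(1-3) by (simp add: algebra_simps)
  also have "\<dots> = D * (racah_weight q c v * (lam * f v + mu * g v))"
    unfolding assms(2,4) assms(6,7)[symmetric] by (simp add: algebra_simps)
  finally show ?thesis using \<open>D \<noteq> 0\<close> by simp
qed

section \<open>The action of the operator on two bases\<close>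

definition racah_basis :: "complex \<Rightarrow> complex \<Rightarrow> nat \<Rightarrow> complex \<Rightarrow> complex" where
  "racah_basis p c k v = qpoch v p k * qpoch (- (c / v)) p k"

lemma racah_basis_0 [simp]: "racah_basis p c 0 v = 1"
  by (simp add: racah_basis_def)

text \<open>
  The factor shared by \<open>g\<^sub>i\<^sub>+\<^sub>1(v)\<close>, \<open>g\<^sub>i\<^sub>+\<^sub>2(v)\<close>, \<open>g\<^sub>i\<^sub>+\<^sub>2(pv)\<close> and \<open>g\<^sub>i\<^sub>+\<^sub>2(v/p)\<close>,
  where \<open>g\<^sub>k = racah_basis p c k\<close>.
\<close>
definition racah_common :: "complex \<Rightarrow> complex \<Rightarrow> nat \<Rightarrow> complex \<Rightarrow> complex" where
  "racah_common p c i v = qpoch (v * p) p i * qpoch (- (c / v) * p) p i"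

lemma racah_basis_Suc_factor:
  "racah_basis p c (Suc i) v = racah_common p c i v * ((1 - v) * (1 + c / v))"
  unfolding racah_basis_def racah_common_def
  by (simp only: qpoch_Suc_shift[of v p i] qpoch_Suc_shift[of "- (c / v)" p i]) (simp add: mult_ac)

lemma racah_basis_Suc_Suc_factor:
  "racah_basis p c (Suc (Suc i)) v
     = racah_common p c i v * ((1 - v) * (1 - v * p ^ Suc i) * (1 + c / v) * (1 + c * p ^ Suc i / v))"
  unfolding racah_basis_def racah_common_def
  by (simp only: qpoch_Suc_shift[of v p "Suc i"] qpoch_Suc[of "v * p" p i]
      qpoch_Suc_shift[of "- (c / v)" p "Suc i"] qpoch_Suc[of "- (c / v) * p" p i])
    (simp add: mult_ac)

lemma racah_basis_Suc_Suc_mult: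
  assumes "p \<noteq> 0"
  shows "racah_basis p c (Suc (Suc i)) (p * v)
     = racah_common p c i v * ((1 - v * p ^ Suc i) * (1 - v * p ^ Suc (Suc i)) * (1 + c / (p * v)) * (1 + c / v))"
proof -
  have "- (c / (p * v)) * p = - (c / v)" using assms by (simp add: field_simps)
  then show ?thesis
    unfolding racah_basis_def racah_common_def
    by (simp only: qpoch_Suc[of "p * v" p "Suc i"] qpoch_Suc[of "p * v" p i]
        qpoch_Suc_shift[of "- (c / (p * v))" p "Suc i"] qpoch_Suc_shift[of "- (c / v)" p i])
      (simp add: mult_ac)
qed

lemma racah_basis_Suc_Suc_div:
  assumes "p \<noteq> 0"
  shows "racah_basis p c (Suc (Suc i)) (v / p)
     = racah_common p c i v * ((1 - v / p) * (1 - v) * (1 + c * p ^ Suc i / v) * (1 + c * p ^ Suc (Suc i) / v))"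
proof -
  have "v / p * p = v" "- (c / (v / p)) = - (c / v) * p" using assms by (simp_all add: field_simps)
  then show ?thesis
    unfolding racah_basis_def racah_common_def
    by (simp only: qpoch_Suc_shift[of "v / p" p "Suc i"] qpoch_Suc_shift[of v p i]
        qpoch_Suc[of "- (c / v) * p" p "Suc i"] qpoch_Suc[of "- (c / v) * p" p i])
      (simp add: mult_ac)
qed

definition racah_eigval :: "complex \<Rightarrow> complex \<Rightarrow> nat \<Rightarrow> complex" where
  "racah_eigval q \<alpha> k = (1 / q^k - 1) * (1 - \<alpha>^2 * q^(k + 1))"

definition racah_lower :: "complex \<Rightarrow> complex \<Rightarrow> complex \<Rightarrow> nat \<Rightarrow> complex" where
  "racah_lower q c \<alpha> k = - (1 / q^(k + 1) - 1) * (1 - \<alpha>^2 * q^(2 * k + 2)) * (1 - c * q^k)"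

lemma racah_op_basis_0: "racah_op q c \<alpha> (racah_basis q c 0) v = 0"
  by (simp add: racah_op_def racah_basis_def)

lemma racah_op_basis_1:
  assumes q: "q \<noteq> 0" and v: "v \<noteq> 0"
  shows "racah_op q c \<alpha> (racah_basis q c (Suc 0)) v = racah_weight q c v *
           (racah_eigval q \<alpha> (Suc 0) * racah_basis q c (Suc 0) v + racah_lower q c \<alpha> 0 * racah_basis q c 0 v)"
proof (rule racah_op_eq_from_values[where Y = "1 / (q * v)" and D = q])
  show "racah_basis q c (Suc 0) (q * v) = 1 / (q * v) * ((1 - q * v) * (q * v + c))"
    using assms unfolding racah_basis_def by (simp add: field_simps)
  show "racah_basis q c (Suc 0) v = 1 / (q * v) * (q * (1 - v) * (v + c))"
    using assms unfolding racah_basis_def by (simp add: field_simps)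
  show "racah_basis q c (Suc 0) (v / q) = 1 / (q * v) * ((q - v) * (v + c * q))"
    using assms unfolding racah_basis_def by (simp add: field_simps)
  show "racah_basis q c 0 v = 1 / (q * v) * (q * v)"
    using assms unfolding racah_basis_def by simp
  show "racah_eigval q \<alpha> (Suc 0) * q = (1 - q) * (1 - \<alpha>^2 * q^2)"
    using q unfolding racah_eigval_def by (simp add: field_simps power2_eq_square)
  show "racah_lower q c \<alpha> 0 * q = - ((1 - q) * (1 - \<alpha>^2 * q^2) * (1 - c))"
    using q unfolding racah_lower_def by (simp add: field_simps power2_eq_square)
qed (use q in \<open>simp_all add: racah_weight_def, algebra\<close>)

lemma racah_op_basis_Suc_Suc:
  assumes q: "q \<noteq> 0" and v: "v \<noteq> 0"
  shows "racah_op q c \<alpha> (racah_basis q c (Suc (Suc i))) v = racah_weight q c v *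
           (racah_eigval q \<alpha> (Suc (Suc i)) * racah_basis q c (Suc (Suc i)) v
            + racah_lower q c \<alpha> (Suc i) * racah_basis q c (Suc i) v)"
proof -
  define t where "t = q ^ Suc i"
  define X where "X = racah_common q c i v"
  have t: "t \<noteq> 0" using q by (simp add: t_def)
  have q_pow: "q ^ (2 * Suc i + 2) = q^2 * t^2"
    unfolding t_def power_mult[symmetric] power_add[symmetric] by (simp add: algebra_simps)
  show ?thesis
  proof (rule racah_op_eq_from_values[where Y = "X / (q * v^2)" and D = "q * t"])
    show "racah_basis q c (Suc (Suc i)) (q * v) = X / (q * v^2) * ((1 - v * t) * (1 - v * t * q) * (q * v + c) * (v + c))"
      unfolding racah_basis_Suc_Suc_mult[OF q] X_def[symmetric] t_def[symmetric]
      using assms by (simp add: t_def field_simps power2_eq_square)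
    show "racah_basis q c (Suc (Suc i)) v = X / (q * v^2) * (q * (1 - v) * (1 - v * t) * (v + c) * (v + c * t))"
      unfolding racah_basis_Suc_Suc_factor X_def[symmetric] t_def[symmetric]
      using assms by (simp add: field_simps power2_eq_square)
    show "racah_basis q c (Suc (Suc i)) (v / q) = X / (q * v^2) * ((q - v) * (1 - v) * (v + c * t) * (v + c * t * q))"
      unfolding racah_basis_Suc_Suc_div[OF q] X_def[symmetric] t_def[symmetric]
      using assms by (simp add: t_def field_simps power2_eq_square)
    show "racah_basis q c (Suc i) v = X / (q * v^2) * (q * v * (1 - v) * (v + c))"
      unfolding racah_basis_Suc_factor X_def[symmetric]
      using assms by (simp add: field_simps power2_eq_square)
    show "racah_eigval q \<alpha> (Suc (Suc i)) * (q * t) = (1 - q * t) * (1 - \<alpha>^2 * q^2 * t)"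
      using q t unfolding racah_eigval_def t_def by (simp add: field_simps power2_eq_square)
    show "racah_lower q c \<alpha> (Suc i) * (q * t) = - ((1 - q * t) * (1 - \<alpha>^2 * q^2 * t^2) * (1 - c * t))"
      using q t unfolding racah_lower_def q_pow by (simp add: t_def field_simps)
  qed (use q t in \<open>simp_all add: racah_weight_def, algebra\<close>)
qed

lemma racah_op_basis_Suc:
  assumes q: "q \<noteq> 0" and v: "v \<noteq> 0"
  shows "racah_op q c \<alpha> (racah_basis q c (Suc k)) v = racah_weight q c v *
           (racah_eigval q \<alpha> (Suc k) * racah_basis q c (Suc k) v + racah_lower q c \<alpha> k * racah_basis q c k v)"
  using racah_op_basis_1[OF q v] racah_op_basis_Suc_Suc[OF q v] by (cases k) simp_all

definition odd_racah_basis :: "complex \<Rightarrow> complex \<Rightarrow> nat \<Rightarrow> complex \<Rightarrow> complex" where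
  "odd_racah_basis q c k v = (v - c / v) * racah_basis (q^2) (- (c^2)) k (v^2)"

definition odd_racah_lower :: "complex \<Rightarrow> complex \<Rightarrow> complex \<Rightarrow> nat \<Rightarrow> complex" where
  "odd_racah_lower q c \<alpha> k = - (1 / q^(2 * k + 2) - 1) * (1 - \<alpha>^2 * q^(2 * k + 2))
     * (1 - c * q^(2 * k + 2)) * (1 - c * q^(2 * k + 1)) / q"

lemma racah_op_odd_basis_0:
  assumes q: "q \<noteq> 0" and v: "v \<noteq> 0"
  shows "racah_op q c \<alpha> (odd_racah_basis q c 0) v
           = racah_weight q c v * (racah_eigval q \<alpha> 1 * odd_racah_basis q c 0 v)"
proof -
  have "racah_op q c \<alpha> (odd_racah_basis q c 0) v = racah_weight q c v *
          (racah_eigval q \<alpha> 1 * odd_racah_basis q c 0 v + 0 * 0)"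
  proof (rule racah_op_eq_from_values[where Y = "1 / (q * v)" and D = q and M = 0 and G = 0 and g = "\<lambda>_. 0"])
    show "odd_racah_basis q c 0 (q * v) = 1 / (q * v) * (q^2 * v^2 - c)"
      using assms unfolding odd_racah_basis_def racah_basis_def by (simp add: field_simps power2_eq_square)
    show "odd_racah_basis q c 0 v = 1 / (q * v) * (q * (v^2 - c))"
      using assms unfolding odd_racah_basis_def racah_basis_def by (simp add: field_simps power2_eq_square)
    show "odd_racah_basis q c 0 (v / q) = 1 / (q * v) * (v^2 - c * q^2)"
      using assms unfolding odd_racah_basis_def racah_basis_def by (simp add: field_simps power2_eq_square)
    show "racah_eigval q \<alpha> 1 * q = (1 - q) * (1 - \<alpha>^2 * q^2)"
      using q unfolding racah_eigval_def by (simp add: field_simps power2_eq_square)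
  qed (use q in \<open>simp_all add: racah_weight_def, algebra\<close>)
  then show ?thesis by simp
qed

lemma racah_op_odd_basis_1:
  assumes q: "q \<noteq> 0" and v: "v \<noteq> 0"
  shows "racah_op q c \<alpha> (odd_racah_basis q c (Suc 0)) v = racah_weight q c v *
           (racah_eigval q \<alpha> (2 * Suc 0 + 1) * odd_racah_basis q c (Suc 0) v
            + odd_racah_lower q c \<alpha> 0 * odd_racah_basis q c 0 v)"
proof (rule racah_op_eq_from_values[where Y = "1 / (q^3 * v^3)" and D = "q^3"])
  show "odd_racah_basis q c (Suc 0) (q * v) = 1 / (q^3 * v^3) * ((q^2 * v^2 - c) * (1 - q^2 * v^2) * (q^2 * v^2 - c^2))"
    using assms unfolding odd_racah_basis_def racah_basis_def by (simp add: field_simps power2_eq_square; algebra)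
  show "odd_racah_basis q c (Suc 0) v = 1 / (q^3 * v^3) * (q^3 * (v^2 - c) * (1 - v^2) * (v^2 - c^2))"
    using assms unfolding odd_racah_basis_def racah_basis_def by (simp add: field_simps power2_eq_square; algebra)
  show "odd_racah_basis q c (Suc 0) (v / q) = 1 / (q^3 * v^3) * ((v^2 - c * q^2) * (q^2 - v^2) * (v^2 - c^2 * q^2))"
    using assms unfolding odd_racah_basis_def racah_basis_def by (simp add: field_simps power2_eq_square; algebra)
  show "odd_racah_basis q c 0 v = 1 / (q^3 * v^3) * (q^3 * v^2 * (v^2 - c))"
    using assms unfolding odd_racah_basis_def racah_basis_def by (simp add: field_simps power2_eq_square; algebra)
  show "racah_eigval q \<alpha> (2 * Suc 0 + 1) * q^3 = (1 - q^3) * (1 - \<alpha>^2 * q^4)"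
    using q unfolding racah_eigval_def by (simp add: field_simps; algebra)
  show "odd_racah_lower q c \<alpha> 0 * q^3 = - ((1 - q^2) * (1 - \<alpha>^2 * q^2) * (1 - c * q^2) * (1 - c * q))"
    using q unfolding odd_racah_lower_def by (simp add: field_simps; algebra)
qed (use q in \<open>simp_all add: racah_weight_def, algebra\<close>)

lemma racah_op_odd_basis_Suc_Suc:
  assumes q: "q \<noteq> 0" and v: "v \<noteq> 0"
  shows "racah_op q c \<alpha> (odd_racah_basis q c (Suc (Suc i))) v = racah_weight q c v *
           (racah_eigval q \<alpha> (2 * Suc (Suc i) + 1) * odd_racah_basis q c (Suc (Suc i)) v
            + odd_racah_lower q c \<alpha> (Suc i) * odd_racah_basis q c (Suc i) v)"
proof -
  define T where "T = (q^2) ^ Suc i"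
  define X where "X = racah_common (q^2) (- (c^2)) i (v^2)"
  have T: "T \<noteq> 0" using q by (simp add: T_def)
  have q_pow: "q ^ (2 * Suc i + 2) = q^2 * T" "q ^ (2 * Suc i + 1) = q * T"
    "q ^ (2 * Suc (Suc i) + 1) = q^3 * T" "q ^ (2 * Suc (Suc i) + 1 + 1) = q^4 * T"
    unfolding T_def power_mult[symmetric] power_add[symmetric] by (simp_all add: algebra_simps power_add eval_nat_numeral)
  have q2: "q^2 \<noteq> 0" using q by simp
  have T_Suc: "(q^2) ^ Suc (Suc i) = T * q^2" unfolding T_def by simp
  show ?thesis
  proof (rule racah_op_eq_from_values[where Y = "X / (q^3 * v^5)" and D = "q^3 * T"])
    show "odd_racah_basis q c (Suc (Suc i)) (q * v) = X / (q^3 * v^5) * ((q^2 * v^2 - c) * (1 - v^2 * T)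
            * (1 - v^2 * T * q^2) * (q^2 * v^2 - c^2) * (v^2 - c^2))"
      unfolding odd_racah_basis_def power_mult_distrib racah_basis_Suc_Suc_mult[OF q2] X_def[symmetric] T_def[symmetric] T_Suc
      using assms by (simp add: field_simps power2_eq_square; algebra)
    show "odd_racah_basis q c (Suc (Suc i)) v = X / (q^3 * v^5) * (q^3 * (v^2 - c) * (1 - v^2) * (1 - v^2 * T)
            * (v^2 - c^2) * (v^2 - c^2 * T))"
      unfolding odd_racah_basis_def racah_basis_Suc_Suc_factor X_def[symmetric] T_def[symmetric]
      using assms by (simp add: field_simps power2_eq_square; algebra)
    show "odd_racah_basis q c (Suc (Suc i)) (v / q) = X / (q^3 * v^5) * ((v^2 - c * q^2) * (q^2 - v^2) * (1 - v^2)
            * (v^2 - c^2 * T) * (v^2 - c^2 * T * q^2))"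
      unfolding odd_racah_basis_def power_divide racah_basis_Suc_Suc_div[OF q2] X_def[symmetric] T_def[symmetric] T_Suc
      using assms by (simp add: field_simps power2_eq_square; algebra)
    show "odd_racah_basis q c (Suc i) v = X / (q^3 * v^5) * (q^3 * v^2 * (v^2 - c) * (1 - v^2) * (v^2 - c^2))"
      unfolding odd_racah_basis_def racah_basis_Suc_factor X_def[symmetric]
      using assms by (simp add: field_simps power2_eq_square; algebra)
    show "racah_eigval q \<alpha> (2 * Suc (Suc i) + 1) * (q^3 * T) = (1 - q^3 * T) * (1 - \<alpha>^2 * q^4 * T)"
      using q T unfolding racah_eigval_def q_pow by (simp add: field_simps; algebra)
    show "odd_racah_lower q c \<alpha> (Suc i) * (q^3 * T)
            = - ((1 - q^2 * T) * (1 - \<alpha>^2 * q^2 * T) * (1 - c * q^2 * T) * (1 - c * q * T))"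
      using q T unfolding odd_racah_lower_def q_pow by (simp add: field_simps; algebra)
  qed (use q T in \<open>simp_all add: racah_weight_def, algebra\<close>)
qed

lemma racah_op_odd_basis_Suc:
  assumes q: "q \<noteq> 0" and v: "v \<noteq> 0"
  shows "racah_op q c \<alpha> (odd_racah_basis q c (Suc k)) v = racah_weight q c v *
           (racah_eigval q \<alpha> (2 * Suc k + 1) * odd_racah_basis q c (Suc k) v
            + odd_racah_lower q c \<alpha> k * odd_racah_basis q c k v)"
  using racah_op_odd_basis_1[OF q v] racah_op_odd_basis_Suc_Suc[OF q v] by (cases k) simp_all

section \<open>Eigenfunctions with \<open>\<^sub>4\<phi>\<^sub>3\<close> coefficients\<close>

lemma sum_eigen_of_lower_triangular:
  fixes a lam mu G dG :: "nat \<Rightarrow> complex"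
  assumes rec: "\<And>k. k < m \<Longrightarrow> a k * lam k + a (Suc k) * mu k = \<Lambda> * a k"
    and dG_0: "dG 0 = lam 0 * G 0"
    and dG_Suc: "\<And>k. dG (Suc k) = lam (Suc k) * G (Suc k) + mu k * G k"
    and "lam m = \<Lambda>"
  shows "(\<Sum>k\<le>m. a k * dG k) = \<Lambda> * (\<Sum>k\<le>m. a k * G k)"
proof -
  have partial: "(\<Sum>k\<le>j. a k * dG k) = \<Lambda> * (\<Sum>k<j. a k * G k) + a j * lam j * G j" if "j \<le> m" for j
    using that
  proof (induction j)
    case 0
    then show ?case using dG_0 by simp
  next
    case (Suc j)
    have "(\<Sum>k\<le>Suc j. a k * dG k)
        = \<Lambda> * (\<Sum>k<j. a k * G k) + (a j * lam j + a (Suc j) * mu j) * G j + a (Suc j) * lam (Suc j) * G (Suc j)"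
      using Suc dG_Suc by (simp add: algebra_simps)
    also have "\<dots> = \<Lambda> * (\<Sum>k<Suc j. a k * G k) + a (Suc j) * lam (Suc j) * G (Suc j)"
      using rec[of j] Suc.prems by (simp add: algebra_simps)
    finally show ?case .
  qed
  show ?thesis
    using partial[of m] \<open>lam m = \<Lambda>\<close> by (simp add: lessThan_Suc_atMost[symmetric] algebra_simps)
qed

definition racah_coeff :: "complex \<Rightarrow> nat \<Rightarrow> complex \<Rightarrow> complex \<Rightarrow> complex \<Rightarrow> complex \<Rightarrow> nat \<Rightarrow> complex" where
  "racah_coeff p m a b1 b2 b3 k = qpoch (inverse (p^m)) p k * qpoch a p k
     / (qpoch b1 p k * qpoch b2 p k * qpoch b3 p k * qpoch p p k) * p^k"

lemma racah_coeff_0 [simp]: "racah_coeff p m a b1 b2 b3 0 = 1"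
  by (simp add: racah_coeff_def)

lemma racah_coeff_Suc:
  "racah_coeff p m a b1 b2 b3 (Suc k) = racah_coeff p m a b1 b2 b3 k
     * ((1 - inverse (p^m) * p^k) * (1 - a * p^k) * p
        / ((1 - b1 * p^k) * (1 - b2 * p^k) * (1 - b3 * p^k) * (1 - p * p^k)))"
  unfolding racah_coeff_def qpoch_Suc by (simp add: divide_inverse inverse_mult_distrib mult_ac)

lemma phi43_term_eq_racah_sum:
  "phi43_term m a v (- (c / v)) b1 b2 b3 p p = (\<Sum>k\<le>m. racah_coeff p m a b1 b2 b3 k * racah_basis p c k v)"
  unfolding phi43_term_def racah_coeff_def racah_basis_def
  by (rule sum.cong) (simp_all add: divide_inverse mult_ac)

lemma racah_coeff_recurrence:
  fixes q c \<alpha> :: complex and m k :: nat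
  defines "a \<equiv> racah_coeff q m (\<alpha>^2 * q^(m + 1)) (q * \<alpha>) (- (q * \<alpha>)) c"
  assumes q: "q \<noteq> 0"
    and nz: "1 - q * \<alpha> * q^k \<noteq> 0" "1 + q * \<alpha> * q^k \<noteq> 0" "1 - c * q^k \<noteq> 0" "1 - q * q^k \<noteq> 0"
  shows "a k * racah_eigval q \<alpha> k + a (Suc k) * racah_lower q c \<alpha> k = racah_eigval q \<alpha> m * a k"
proof -
  define y where "y = q^k"
  define Z where "Z = q^m"
  define N where "N = (1 - inverse Z * y) * (1 - \<alpha>^2 * (q * Z) * y)"
  define D1 D2 D3 D4 where "D1 = 1 - q * \<alpha> * y" "D2 = 1 + q * \<alpha> * y" "D3 = 1 - c * y" "D4 = 1 - q * y"
  have yZ: "y \<noteq> 0" "Z \<noteq> 0" using q by (simp_all add: y_def Z_def)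
  have D: "D1 \<noteq> 0" "D2 \<noteq> 0" "D3 \<noteq> 0" "D4 \<noteq> 0" using nz by (simp_all add: D1_D2_D3_D4_def y_def)
  have pows: "q^(k + 1) = q * y" "q^(2 * k + 2) = q^2 * y^2" "q^(m + 1) = q * Z"
    unfolding y_def Z_def by (simp_all add: power_add power_even_eq power2_eq_square)
  have lower: "racah_lower q c \<alpha> k = - (D4 / (q * y)) * (D1 * D2 * D3)"
    using q yZ unfolding racah_lower_def pows y_def[symmetric] D1_D2_D3_D4_def by (simp add: field_simps; algebra)
  have "N * q / (D1 * D2 * D3 * D4) * racah_lower q c \<alpha> k = - N / y"
    unfolding lower using q yZ D by (simp add: field_simps)
  moreover have "racah_eigval q \<alpha> k - N / y = racah_eigval q \<alpha> m"
    using q yZ unfolding racah_eigval_def pows N_def y_def[symmetric] Z_def[symmetric]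
    by (simp add: field_simps; algebra)
  ultimately have step: "racah_eigval q \<alpha> k + N * q / (D1 * D2 * D3 * D4) * racah_lower q c \<alpha> k
      = racah_eigval q \<alpha> m"
    by simp
  have ratio: "a (Suc k) = a k * (N * q / (D1 * D2 * D3 * D4))"
    unfolding a_def racah_coeff_Suc N_def D1_D2_D3_D4_def y_def Z_def by (simp add: mult_ac)
  show ?thesis
    unfolding ratio step[symmetric] by (simp add: algebra_simps)
qed

lemma odd_racah_coeff_recurrence:
  fixes q c \<alpha> :: complex and n j :: nat
  defines "b \<equiv> racah_coeff (q^2) n (\<alpha>^2 * q^(2 * n + 3)) (q^2 * \<alpha>^2) (q^2 * c) (q * c)"
  assumes q: "q \<noteq> 0"
    and nz: "1 - q^2 * \<alpha>^2 * (q^2)^j \<noteq> 0" "1 - q^2 * c * (q^2)^j \<noteq> 0" "1 - q * c * (q^2)^j \<noteq> 0"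
      "1 - q^2 * (q^2)^j \<noteq> 0"
  shows "b j * racah_eigval q \<alpha> (2 * j + 1) + b (Suc j) * odd_racah_lower q c \<alpha> j
           = racah_eigval q \<alpha> (2 * n + 1) * b j"
proof -
  define y where "y = (q^2)^j"
  define Z where "Z = (q^2)^n"
  define N where "N = (1 - inverse Z * y) * (1 - \<alpha>^2 * (q^3 * Z) * y)"
  define D1 D2 D3 D4 where "D1 = 1 - q^2 * \<alpha>^2 * y" "D2 = 1 - q^2 * c * y" "D3 = 1 - q * c * y" "D4 = 1 - q^2 * y"
  have yZ: "y \<noteq> 0" "Z \<noteq> 0" using q by (simp_all add: y_def Z_def)
  have D: "D1 \<noteq> 0" "D2 \<noteq> 0" "D3 \<noteq> 0" "D4 \<noteq> 0" using nz by (simp_all add: D1_D2_D3_D4_def y_def)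
  have pows: "q^(2 * j + 1) = q * y" "q^(2 * j + 1 + 1) = q^2 * y" "q^(2 * j + 2) = q^2 * y"
    "q^(2 * n + 1) = q * Z" "q^(2 * n + 1 + 1) = q^2 * Z" "q^(2 * n + 3) = q^3 * Z" "(q^2)^n = Z"
    unfolding y_def Z_def by (simp_all add: power_add power_mult power2_eq_square)
  have lower: "odd_racah_lower q c \<alpha> j = - (D4 / (q^3 * y)) * (D1 * D2 * D3)"
    using q yZ unfolding odd_racah_lower_def pows D1_D2_D3_D4_def by (simp add: field_simps; algebra)
  have "N * q^2 / (D1 * D2 * D3 * D4) * odd_racah_lower q c \<alpha> j = - N / (q * y)"
    unfolding lower using q yZ D by (simp add: field_simps; algebra)
  moreover have "racah_eigval q \<alpha> (2 * j + 1) - N / (q * y) = racah_eigval q \<alpha> (2 * n + 1)"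
    using q yZ unfolding racah_eigval_def pows N_def by (simp add: field_simps; algebra)
  ultimately have step: "racah_eigval q \<alpha> (2 * j + 1) + N * q^2 / (D1 * D2 * D3 * D4) * odd_racah_lower q c \<alpha> j
      = racah_eigval q \<alpha> (2 * n + 1)"
    by simp
  have ratio: "b (Suc j) = b j * (N * q^2 / (D1 * D2 * D3 * D4))"
    unfolding b_def racah_coeff_Suc N_def D1_D2_D3_D4_def y_def[symmetric] pows by (simp add: mult_ac)
  show ?thesis
    unfolding ratio step[symmetric] by (simp add: algebra_simps)
qed

lemma racah_sum_eigenfunction:
  assumes q: "q \<noteq> 0" and v: "v \<noteq> 0"
    and nz: "\<And>k. k < m \<Longrightarrow>
      1 - q * \<alpha> * q^k \<noteq> 0 \<and> 1 + q * \<alpha> * q^k \<noteq> 0 \<and> 1 - c * q^k \<noteq> 0 \<and> 1 - q * q^k \<noteq> 0"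
  defines "a \<equiv> racah_coeff q m (\<alpha>^2 * q^(m + 1)) (q * \<alpha>) (- (q * \<alpha>)) c"
  shows "racah_op q c \<alpha> (\<lambda>w. \<Sum>k\<le>m. a k * racah_basis q c k w) v
           = racah_eigval q \<alpha> m * racah_weight q c v * (\<Sum>k\<le>m. a k * racah_basis q c k v)"
proof -
  have "(\<Sum>k\<le>m. a k * racah_op q c \<alpha> (racah_basis q c k) v)
      = racah_eigval q \<alpha> m * (\<Sum>k\<le>m. a k * (racah_weight q c v * racah_basis q c k v))"
  proof (rule sum_eigen_of_lower_triangular[where lam = "racah_eigval q \<alpha>" and mu = "racah_lower q c \<alpha>"])
    show "a k * racah_eigval q \<alpha> k + a (Suc k) * racah_lower q c \<alpha> k = racah_eigval q \<alpha> m * a k"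
      if "k < m" for k
      using nz[OF that] unfolding a_def by (intro racah_coeff_recurrence q) auto
    show "racah_op q c \<alpha> (racah_basis q c 0) v = racah_eigval q \<alpha> 0 * (racah_weight q c v * racah_basis q c 0 v)"
      by (simp add: racah_op_basis_0 racah_eigval_def)
    show "racah_op q c \<alpha> (racah_basis q c (Suc k)) v = racah_eigval q \<alpha> (Suc k) * (racah_weight q c v * racah_basis q c (Suc k) v)
        + racah_lower q c \<alpha> k * (racah_weight q c v * racah_basis q c k v)" for k
      unfolding racah_op_basis_Suc[OF q v] by (simp add: algebra_simps)
  qed simp
  then show ?thesis
    unfolding racah_op_sum by (simp add: sum_distrib_left mult_ac)
qed

lemma odd_racah_sum_eigenfunction:
  assumes q: "q \<noteq> 0" and v: "v \<noteq> 0"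
    and nz: "\<And>j. j < n \<Longrightarrow> 1 - q^2 * \<alpha>^2 * (q^2)^j \<noteq> 0 \<and> 1 - q^2 * c * (q^2)^j \<noteq> 0
      \<and> 1 - q * c * (q^2)^j \<noteq> 0 \<and> 1 - q^2 * (q^2)^j \<noteq> 0"
  defines "b \<equiv> racah_coeff (q^2) n (\<alpha>^2 * q^(2 * n + 3)) (q^2 * \<alpha>^2) (q^2 * c) (q * c)"
  shows "racah_op q c \<alpha> (\<lambda>w. \<Sum>j\<le>n. b j * odd_racah_basis q c j w) v
           = racah_eigval q \<alpha> (2 * n + 1) * racah_weight q c v * (\<Sum>j\<le>n. b j * odd_racah_basis q c j v)"
proof -
  have "(\<Sum>j\<le>n. b j * racah_op q c \<alpha> (odd_racah_basis q c j) v)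
      = racah_eigval q \<alpha> (2 * n + 1) * (\<Sum>j\<le>n. b j * (racah_weight q c v * odd_racah_basis q c j v))"
  proof (rule sum_eigen_of_lower_triangular[where lam = "\<lambda>j. racah_eigval q \<alpha> (2 * j + 1)"
        and mu = "odd_racah_lower q c \<alpha>"])
    show "b j * racah_eigval q \<alpha> (2 * j + 1) + b (Suc j) * odd_racah_lower q c \<alpha> j
        = racah_eigval q \<alpha> (2 * n + 1) * b j" if "j < n" for j
      using nz[OF that] unfolding b_def by (intro odd_racah_coeff_recurrence q) auto
    show "racah_op q c \<alpha> (odd_racah_basis q c 0) v
        = racah_eigval q \<alpha> (2 * 0 + 1) * (racah_weight q c v * odd_racah_basis q c 0 v)"
      unfolding racah_op_odd_basis_0[OF q v] by (simp add: mult_ac)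
    show "racah_op q c \<alpha> (odd_racah_basis q c (Suc j)) v
        = racah_eigval q \<alpha> (2 * Suc j + 1) * (racah_weight q c v * odd_racah_basis q c (Suc j) v)
          + odd_racah_lower q c \<alpha> j * (racah_weight q c v * odd_racah_basis q c j v)" for j
      unfolding racah_op_odd_basis_Suc[OF q v] by (simp add: algebra_simps)
  qed simp
  then show ?thesis
    unfolding racah_op_sum by (simp add: sum_distrib_left mult_ac)
qed

section \<open>Uniqueness of polynomial eigenfunctions\<close>

lemma racah_eigenfunction_zero_on_grid:
  fixes E :: "complex \<Rightarrow> complex"
  assumes q: "q \<noteq> 0"
    and eig: "\<And>j. j < d \<Longrightarrow> racah_op q c \<alpha> E (inverse (q^j))
                 = \<Lambda> * racah_weight q c (inverse (q^j)) * E (inverse (q^j))"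
    and nz: "\<And>j. j < d \<Longrightarrow> (inverse (q^j)^2 - c^2) * (inverse (q^j)^2 - q^2 * \<alpha>^2)
                 * (c + q * inverse (q^j)^2) \<noteq> 0"
    and E_1: "E 1 = 0"
    and "j \<le> d"
  shows "E (inverse (q^j)) = 0"
proof -
  have step: "E (inverse (q^Suc i)) = 0"
    if "i < d" and E_i: "E (inverse (q^i)) = 0"
      and up: "(1 - inverse (q^i)^2) * (c^2 - q^2 * \<alpha>^2 * inverse (q^i)^2) * (inverse (q^i)^2 + q * c)
                 * E (q * inverse (q^i)) = 0" for i
  proof -
    define w where "w = inverse (q^i)"
    have w_div: "w / q = inverse (q^Suc i)" using q by (simp add: w_def field_simps)
    have "racah_op q c \<alpha> E w = 0" using eig[OF \<open>i < d\<close>] E_i by (simp add: w_def)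
    then have "(1 - w^2) * (c^2 - q^2 * \<alpha>^2 * w^2) * (w^2 + q * c) * E (q * w)
        + (w^2 - c^2) * (w^2 - q^2 * \<alpha>^2) * (c + q * w^2) * E (inverse (q^Suc i)) = 0"
      using E_i unfolding racah_op_def w_def[symmetric] w_div[symmetric] by (simp only: diff_zero)
    then have "(w^2 - c^2) * (w^2 - q^2 * \<alpha>^2) * (c + q * w^2) * E (inverse (q^Suc i)) = 0"
      using up unfolding w_def[symmetric] by simp
    then show ?thesis using nz[OF \<open>i < d\<close>] unfolding w_def by simp
  qed
  have "E (inverse (q^i)) = 0 \<and> E (inverse (q^Suc i)) = 0" if "i < d" for i
    using that
  proof (induction i)
    case 0
    then show ?case using step[of 0] E_1 by simp
  next
    case (Suc i)
    then have IH: "E (inverse (q^i)) = 0" "E (inverse (q^Suc i)) = 0" by simp_all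
    have shift: "q * inverse (q^Suc i) = inverse (q^i)" using q by (simp add: field_simps)
    have "E (inverse (q^Suc (Suc i))) = 0"
      by (rule step) (use Suc.prems IH in \<open>unfold shift, simp_all\<close>)
    then show ?case using IH by simp
  qed
  then show ?thesis using \<open>j \<le> d\<close> E_1 by (cases j) auto
qed

definition racah_basis_poly :: "complex \<Rightarrow> complex \<Rightarrow> nat \<Rightarrow> complex poly" where
  "racah_basis_poly p c k = (\<Prod>i<k. [:1 - c * p^(2 * i), - (p^i):])"

lemma poly_racah_basis_poly:
  assumes "v \<noteq> 0"
  shows "poly (racah_basis_poly p c k) (v - c / v) = racah_basis p c k v"
proof -
  have "poly [:1 - c * p^(2 * i), - (p^i):] (v - c / v) = (1 - v * p^i) * (1 - - (c / v) * p^i)" for i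
    using assms unfolding power_even_eq by (simp add: field_simps power2_eq_square)
  then show ?thesis
    unfolding racah_basis_poly_def racah_basis_def qpoch_def poly_prod prod.distrib[symmetric] by simp
qed

lemma degree_racah_basis_poly: "degree (racah_basis_poly p c k) \<le> k"
proof -
  have "degree (racah_basis_poly p c k) \<le> (\<Sum>i<k. degree [:1 - c * p^(2 * i), - (p^i):])"
    unfolding racah_basis_poly_def by (rule degree_prod_sum_le[unfolded o_def]) simp
  also have "\<dots> \<le> (\<Sum>i<k. 1)"
    by (rule sum_mono) (simp add: degree_pCons_le)
  finally show ?thesis by simp
qed

definition odd_racah_basis_poly :: "complex \<Rightarrow> complex \<Rightarrow> nat \<Rightarrow> complex poly" where
  "odd_racah_basis_poly q c k = [:0, 1:] * pcompose (racah_basis_poly (q^2) (- (c^2)) k) [:2 * c, 0, 1:]"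

lemma poly_odd_racah_basis_poly:
  assumes "v \<noteq> 0"
  shows "poly (odd_racah_basis_poly q c k) (v - c / v) = odd_racah_basis q c k v"
proof -
  have u2: "poly [:2 * c, 0, 1:] (v - c / v) = v^2 - - (c^2) / v^2"
    using assms by (simp add: field_simps power2_eq_square; algebra)
  have "v^2 \<noteq> 0" using assms by simp
  then show ?thesis
    unfolding odd_racah_basis_poly_def odd_racah_basis_def poly_mult poly_pcompose u2
      poly_racah_basis_poly[OF \<open>v^2 \<noteq> 0\<close>] by simp
qed

lemma degree_odd_racah_basis_poly: "degree (odd_racah_basis_poly q c k) \<le> 2 * k + 1"
proof -
  have "degree (pcompose (racah_basis_poly (q^2) (- (c^2)) k) [:2 * c, 0, 1:]) \<le> k * 2"
    using degree_pcompose_le[of "racah_basis_poly (q^2) (- (c^2)) k" "[:2 * c, 0, 1:]"]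
      degree_racah_basis_poly[of "q^2" "- (c^2)" k]
    by (simp add: order_trans)
  then show ?thesis
    unfolding odd_racah_basis_poly_def
    using degree_mult_le[of "[:0, 1:]"] by (simp add: order_trans)
qed

lemma poly_racah_sum:
  assumes "w \<noteq> 0"
  shows "poly (\<Sum>k\<le>m. smult (a k) (racah_basis_poly p c k)) (w - c / w) = (\<Sum>k\<le>m. a k * racah_basis p c k w)"
  using assms by (simp add: poly_sum poly_racah_basis_poly)

lemma degree_racah_sum: "degree (\<Sum>k\<le>m. smult (a k) (racah_basis_poly p c k)) \<le> m"
  by (intro degree_sum_le) (auto intro: order_trans[OF degree_smult_le] order_trans[OF degree_racah_basis_poly])

lemma poly_odd_racah_sum:
  assumes "w \<noteq> 0"
  shows "poly (\<Sum>j\<le>n. smult (b j) (odd_racah_basis_poly q c j)) (w - c / w) = (\<Sum>j\<le>n. b j * odd_racah_basis q c j w)"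
  using assms by (simp add: poly_sum poly_odd_racah_basis_poly)

lemma degree_odd_racah_sum: "degree (\<Sum>j\<le>n. smult (b j) (odd_racah_basis_poly q c j)) \<le> 2 * n + 1"
  by (intro degree_sum_le) (auto intro: order_trans[OF degree_smult_le] order_trans[OF degree_odd_racah_basis_poly])

lemma racah_sum_at_1: "(\<Sum>k\<le>m. a k * racah_basis p c k 1) = a 0"
proof -
  have "racah_basis p c (Suc k) 1 = 0" for k
    by (simp add: racah_basis_def qpoch_Suc_shift)
  then show ?thesis
    by (simp add: sum.atMost_shift)
qed

lemma odd_racah_sum_at_1: "(\<Sum>j\<le>n. b j * odd_racah_basis q c j 1) = b 0 * (1 - c)"
proof -
  have "odd_racah_basis q c (Suc j) 1 = 0" for j
    unfolding odd_racah_basis_def racah_basis_def qpoch_Suc_shift by simp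
  moreover have "odd_racah_basis q c 0 1 = 1 - c"
    by (simp add: odd_racah_basis_def)
  ultimately show ?thesis
    by (simp add: sum.atMost_shift)
qed

lemma racah_eigenfunctions_eq:
  fixes F G :: "complex \<Rightarrow> complex" and P R :: "complex poly"
  assumes q: "q \<noteq> 0"
    and F: "\<And>w. w \<noteq> 0 \<Longrightarrow> F w = poly P (w - c / w)" and "degree P \<le> d"
    and G: "\<And>w. w \<noteq> 0 \<Longrightarrow> G w = poly R (w - c / w)" and "degree R \<le> d"
    and eig_F: "\<And>j. j < d \<Longrightarrow> racah_op q c \<alpha> F (inverse (q^j))
                 = \<Lambda> * racah_weight q c (inverse (q^j)) * F (inverse (q^j))"
    and eig_G: "\<And>j. j < d \<Longrightarrow> racah_op q c \<alpha> G (inverse (q^j))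
                 = \<Lambda> * racah_weight q c (inverse (q^j)) * G (inverse (q^j))"
    and nz: "\<And>j. j < d \<Longrightarrow> (inverse (q^j)^2 - c^2) * (inverse (q^j)^2 - q^2 * \<alpha>^2)
                 * (c + q * inverse (q^j)^2) \<noteq> 0"
    and "F 1 = G 1"
    and inj: "inj_on (\<lambda>j. inverse (q^j) - c / inverse (q^j)) {..d}"
    and "w \<noteq> 0"
  shows "F w = G w"
proof -
  have zero: "F (inverse (q^j)) - G (inverse (q^j)) = 0" if "j \<le> d" for j
  proof (rule racah_eigenfunction_zero_on_grid[OF q _ nz _ that, of _ \<Lambda>])
    show "racah_op q c \<alpha> (\<lambda>w. F w - G w) (inverse (q^j))
        = \<Lambda> * racah_weight q c (inverse (q^j)) * (F (inverse (q^j)) - G (inverse (q^j)))" if "j < d" for j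
      unfolding racah_op_diff eig_F[OF that] eig_G[OF that] by (simp add: algebra_simps)
  qed (use \<open>F 1 = G 1\<close> in auto)
  have "P = R"
  proof (rule poly_eqI_degree)
    let ?A = "(\<lambda>j. inverse (q^j) - c / inverse (q^j)) ` {..d}"
    show "poly P x = poly R x" if "x \<in> ?A" for x
      using that zero F G q by auto
    show "degree P < card ?A" "degree R < card ?A"
      using card_image[OF inj] \<open>degree P \<le> d\<close> \<open>degree R \<le> d\<close> by simp_all
  qed
  then show ?thesis using F G \<open>w \<noteq> 0\<close> by simp
qed

section \<open>Real \<open>0 < q < 1\<close> and \<open>c = q\<^bsup>-M-1\<^esup>\<close>\<close>

lemma one_minus_mult_ne_0:
  fixes x y :: "'a :: field"
  assumes "x \<noteq> inverse y" "y \<noteq> 0"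
  shows "1 - x * y \<noteq> 0"
  using assms by (metis eq_iff_diff_eq_0 inverse_unique mult.commute)

lemma one_minus_real_pow_ne_0:
  fixes q :: real
  assumes "0 < q" "q < 1" "i \<noteq> m"
  shows "1 - complex_of_real (inverse (q^m)) * complex_of_real q ^ i \<noteq> 0"
proof
  assume "1 - complex_of_real (inverse (q^m)) * complex_of_real q ^ i = 0"
  then have "inverse (q^m) * q^i = 1"
    by (metis eq_iff_diff_eq_0 of_real_eq_1_iff of_real_mult of_real_power)
  then have "q^i = q^m" using assms(1) by (simp add: field_simps)
  then show False using assms power_inject_exp'[of q i m] by simp
qed

lemma inj_racah_grid:
  fixes q r :: real
  assumes "0 < q" "q < 1" "0 \<le> r"
  shows "inj (\<lambda>j. inverse (complex_of_real q ^ j) - complex_of_real r / inverse (complex_of_real q ^ j))"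
proof (rule linorder_injI)
  fix i j :: nat assume "i < j"
  then have "q^j < q^i" using assms by simp
  then have "inverse (q^i) < inverse (q^j)" "r * q^j \<le> r * q^i"
    using assms by (auto intro: mult_left_mono less_imp_inverse_less)
  then have "inverse (q^i) - r * q^i < inverse (q^j) - r * q^j"
    by linarith
  then show "inverse (complex_of_real q ^ i) - complex_of_real r / inverse (complex_of_real q ^ i)
      \<noteq> inverse (complex_of_real q ^ j) - complex_of_real r / inverse (complex_of_real q ^ j)"
    by (metis (no_types) divide_inverse inverse_inverse_eq less_irrefl of_real_diff of_real_eq_iff
        of_real_inverse of_real_mult of_real_power)
qed

lemma racah_denominators_ne_0:
  fixes q :: real and M k :: nat and \<alpha> :: complex
  defines "Q \<equiv> complex_of_real q" and "c \<equiv> complex_of_real (inverse (q^(M + 1)))"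
  assumes q: "0 < q" "q < 1" and "k \<le> M"
    and h1: "Q * \<alpha> \<noteq> inverse (Q^k)" and h2: "- (Q * \<alpha>) \<noteq> inverse (Q^k)"
  shows "1 - Q * \<alpha> * Q^k \<noteq> 0 \<and> 1 + Q * \<alpha> * Q^k \<noteq> 0 \<and> 1 - c * Q^k \<noteq> 0 \<and> 1 - Q * Q^k \<noteq> 0"
proof -
  have "Q^k \<noteq> 0" using q by (simp add: Q_def)
  moreover have "1 - c * Q^k \<noteq> 0"
    unfolding c_def Q_def using q \<open>k \<le> M\<close> by (intro one_minus_real_pow_ne_0) auto
  moreover have "1 - Q * Q^k \<noteq> 0"
    using one_minus_real_pow_ne_0[OF q, of "Suc k" 0] by (simp add: Q_def)
  ultimately show ?thesis
    using one_minus_mult_ne_0[OF h1] one_minus_mult_ne_0[OF h2] by simp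
qed

lemma odd_racah_denominators_ne_0:
  fixes q :: real and M j :: nat and \<alpha> :: complex
  defines "Q \<equiv> complex_of_real q" and "c \<equiv> complex_of_real (inverse (q^(M + 1)))"
  assumes q: "0 < q" "q < 1" and "2 * j + 2 \<le> M"
    and h3: "Q^2 * \<alpha>^2 \<noteq> inverse (Q^(2 * j))"
  shows "1 - Q^2 * \<alpha>^2 * (Q^2)^j \<noteq> 0 \<and> 1 - Q^2 * c * (Q^2)^j \<noteq> 0
           \<and> 1 - Q * c * (Q^2)^j \<noteq> 0 \<and> 1 - Q^2 * (Q^2)^j \<noteq> 0"
proof -
  have pw: "Q^(2 * j) = (Q^2)^j" "Q^(2 * j + 2) = (Q^2)^j * Q^2" "Q^(2 * j + 1) = (Q^2)^j * Q"
    by (simp_all only: power_add power_mult[of Q 2 j] power_one_right)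
  have eqs: "Q^2 * c * (Q^2)^j = c * Q^(2 * j + 2)" "Q * c * (Q^2)^j = c * Q^(2 * j + 1)"
    "Q^2 * (Q^2)^j = Q * Q^(2 * j + 1)"
    unfolding pw(2,3) by (simp_all only: mult_ac power2_eq_square)
  have "Q^(2 * j) \<noteq> 0" using q by (simp add: Q_def)
  then have "1 - Q^2 * \<alpha>^2 * (Q^2)^j \<noteq> 0"
    using one_minus_mult_ne_0[OF h3] unfolding pw(1) by simp
  moreover have "1 - c * Q^(2 * j + 2) \<noteq> 0" "1 - c * Q^(2 * j + 1) \<noteq> 0"
    unfolding c_def Q_def using q \<open>2 * j + 2 \<le> M\<close> by (intro one_minus_real_pow_ne_0; simp)+
  moreover have "1 - Q * Q^(2 * j + 1) \<noteq> 0"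
    using one_minus_real_pow_ne_0[OF q, of "Suc (2 * j + 1)" 0] by (simp add: Q_def)
  ultimately show ?thesis unfolding eqs by blast
qed

lemma racah_grid_coeff_ne_0:
  fixes q :: real and \<alpha> :: complex and M j :: nat
  defines "Q \<equiv> complex_of_real q" and "c \<equiv> complex_of_real (inverse (q^(M + 1)))"
  assumes q: "0 < q" "q < 1" and "j \<le> M"
    and h1: "Q * \<alpha> \<noteq> inverse (Q^j)" and h2: "- (Q * \<alpha>) \<noteq> inverse (Q^j)"
  shows "(inverse (Q^j)^2 - c^2) * (inverse (Q^j)^2 - Q^2 * \<alpha>^2) * (c + Q * inverse (Q^j)^2) \<noteq> 0"
proof -
  define v where "v = inverse (Q^j)"
  have Qj: "Q^j \<noteq> 0" using q by (simp add: Q_def)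
  have v_real: "v = complex_of_real (inverse (q^j))" by (simp add: v_def Q_def)
  have "v - c = v * (1 - c * Q^j)" using Qj by (simp add: v_def field_simps)
  moreover have "1 - c * Q^j \<noteq> 0"
    unfolding c_def Q_def using q \<open>j \<le> M\<close> by (intro one_minus_real_pow_ne_0) auto
  ultimately have "v - c \<noteq> 0" using Qj by (simp add: v_def)
  moreover have "v + c \<noteq> 0"
  proof -
    have "v + c = complex_of_real (inverse (q^j) + inverse (q^(M + 1)))" by (simp add: v_real c_def)
    moreover have "0 < inverse (q^j) + inverse (q^(M + 1))" using q by (simp add: add_pos_pos)
    ultimately show ?thesis by (metis of_real_eq_0_iff order_less_irrefl)
  qed
  ultimately have "v^2 - c^2 \<noteq> 0"
    by (simp add: power2_eq_square square_diff_square_factored)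
  moreover have "v^2 - Q^2 * \<alpha>^2 = v^2 * ((1 - Q * \<alpha> * Q^j) * (1 - - (Q * \<alpha>) * Q^j))"
    using Qj by (simp add: v_def field_simps power2_eq_square)
  moreover have "1 - Q * \<alpha> * Q^j \<noteq> 0" "1 - - (Q * \<alpha>) * Q^j \<noteq> 0"
    using one_minus_mult_ne_0[OF h1 Qj] one_minus_mult_ne_0[OF h2 Qj] by simp_all
  moreover have "c + Q * v^2 \<noteq> 0"
  proof -
    have "c + Q * v^2 = complex_of_real (inverse (q^(M + 1)) + q * inverse (q^j)^2)"
      by (simp add: v_real c_def Q_def)
    moreover have "0 < inverse (q^(M + 1)) + q * inverse (q^j)^2" using q by (simp add: add_pos_pos)
    ultimately show ?thesis by (metis of_real_eq_0_iff order_less_irrefl)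
  qed
  ultimately show ?thesis using Qj unfolding v_def by simp
qed

lemma racah_sum_eq_odd_racah_sum:
  fixes q :: real and M n :: nat and \<alpha> v :: complex
  defines "Q \<equiv> complex_of_real q" and "c \<equiv> complex_of_real (inverse (q^(M + 1)))"
  assumes q: "0 < q" "q < 1" and "2 * n \<le> M" and "v \<noteq> 0"
    and h1: "\<forall>j. Q * \<alpha> \<noteq> inverse (Q^j)" and h2: "\<forall>j. - (Q * \<alpha>) \<noteq> inverse (Q^j)"
    and h3: "\<forall>j. Q^2 * \<alpha>^2 \<noteq> inverse (Q^j)"
  shows "(\<Sum>k\<le>2 * n + 1. racah_coeff Q (2 * n + 1) (\<alpha>^2 * Q^(2 * n + 1 + 1)) (Q * \<alpha>) (- (Q * \<alpha>)) c k
            * racah_basis Q c k v)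
       = inverse (1 - c) * (\<Sum>j\<le>n. racah_coeff (Q^2) n (\<alpha>^2 * Q^(2 * n + 3)) (Q^2 * \<alpha>^2) (Q^2 * c) (Q * c) j
            * odd_racah_basis Q c j v)"
    (is "?F v = ?G v")
proof -
  have Q: "Q \<noteq> 0" using q by (simp add: Q_def)
  have "1 < inverse (q^(M + 1))"
    using one_less_inverse[of "q^(M + 1)"] power_Suc_less_one[OF q, of M] q by simp
  then have c1: "c \<noteq> 1" unfolding c_def of_real_eq_1_iff by linarith
  have nz_even: "1 - Q * \<alpha> * Q^k \<noteq> 0 \<and> 1 + Q * \<alpha> * Q^k \<noteq> 0 \<and> 1 - c * Q^k \<noteq> 0 \<and> 1 - Q * Q^k \<noteq> 0"
    if "k < 2 * n + 1" for k
    by (rule racah_denominators_ne_0[OF q, where M = M, folded Q_def c_def])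
      (use that \<open>2 * n \<le> M\<close> h1 h2 in auto)
  have nz_odd: "1 - Q^2 * \<alpha>^2 * (Q^2)^j \<noteq> 0 \<and> 1 - Q^2 * c * (Q^2)^j \<noteq> 0
      \<and> 1 - Q * c * (Q^2)^j \<noteq> 0 \<and> 1 - Q^2 * (Q^2)^j \<noteq> 0" if "j < n" for j
    by (rule odd_racah_denominators_ne_0[OF q, where M = M, folded Q_def c_def])
      (use that \<open>2 * n \<le> M\<close> h3 in auto)
  have inv_ne: "inverse (Q^j) \<noteq> 0" for j using Q by simp
  define a where "a = racah_coeff Q (2 * n + 1) (\<alpha>^2 * Q^(2 * n + 1 + 1)) (Q * \<alpha>) (- (Q * \<alpha>)) c"
  define b where "b = racah_coeff (Q^2) n (\<alpha>^2 * Q^(2 * n + 3)) (Q^2 * \<alpha>^2) (Q^2 * c) (Q * c)"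
  have F_poly: "?F w = poly (\<Sum>k\<le>2 * n + 1. smult (a k) (racah_basis_poly Q c k)) (w - c / w)" if "w \<noteq> 0" for w
    unfolding poly_racah_sum[OF that] a_def ..
  have G_poly: "?G w = poly (smult (inverse (1 - c)) (\<Sum>j\<le>n. smult (b j) (odd_racah_basis_poly Q c j))) (w - c / w)"
    if "w \<noteq> 0" for w
    unfolding poly_smult poly_odd_racah_sum[OF that] b_def ..
  show ?thesis
  proof (rule racah_eigenfunctions_eq[OF Q F_poly degree_racah_sum G_poly
        degree_smult_le[THEN order_trans, OF degree_odd_racah_sum] _ _ _ _ _ \<open>v \<noteq> 0\<close>])
    show "racah_op Q c \<alpha> ?F (inverse (Q^j)) = racah_eigval Q \<alpha> (2 * n + 1)
        * racah_weight Q c (inverse (Q^j)) * ?F (inverse (Q^j))" for j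
      using racah_sum_eigenfunction[OF Q inv_ne nz_even] .
    show "racah_op Q c \<alpha> ?G (inverse (Q^j)) = racah_eigval Q \<alpha> (2 * n + 1)
        * racah_weight Q c (inverse (Q^j)) * ?G (inverse (Q^j))" for j
      using odd_racah_sum_eigenfunction[OF Q inv_ne nz_odd] unfolding racah_op_scale
      by (simp only: mult_ac)
    show "(inverse (Q^j)^2 - c^2) * (inverse (Q^j)^2 - Q^2 * \<alpha>^2) * (c + Q * inverse (Q^j)^2) \<noteq> 0"
      if "j < 2 * n + 1" for j
      by (rule racah_grid_coeff_ne_0[OF q, where M = M and j = j, folded Q_def c_def])
        (use that \<open>2 * n \<le> M\<close> h1 h2 in auto)
    show "?F 1 = ?G 1"
      using c1 by (simp add: racah_sum_at_1 odd_racah_sum_at_1)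
    show "inj_on (\<lambda>j. inverse (Q^j) - c / inverse (Q^j)) {..2 * n + 1}"
      using q
      by (intro inj_on_subset[OF inj_racah_grid[OF q, of "inverse (q^(M + 1))", folded Q_def c_def]]) auto
  qed simp_all
qed

section \<open>Complex powers of \<open>q\<close> and the transformation\<close>

lemma cqpow_add: "cqpow q (z + w) = cqpow q z * cqpow q w"
  unfolding cqpow_def by (simp add: distrib_right exp_add)

lemma cqpow_diff: "cqpow q (z - w) = cqpow q z / cqpow q w"
  unfolding cqpow_def by (simp add: left_diff_distrib exp_diff)

lemma cqpow_of_nat:
  assumes "0 < q"
  shows "cqpow q (of_nat k) = complex_of_real q ^ k"
proof -
  have "exp (complex_of_real (ln q)) = complex_of_real q"
    using assms by (simp only: exp_of_real exp_ln)
  then show ?thesis unfolding cqpow_def by (simp add: exp_of_nat_mult)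
qed

lemma cqpow_minus_of_nat:
  assumes "0 < q"
  shows "cqpow q (- of_nat k) = complex_of_real (inverse (q^k))"
proof -
  have "cqpow q (- of_nat k) = inverse (cqpow q (of_nat k))"
    unfolding cqpow_def by (simp add: exp_minus)
  then show ?thesis using cqpow_of_nat[OF assms] by simp
qed

lemma cqpow_exponents:
  fixes x N :: complex
  assumes "0 < q"
  shows "cqpow q (x - N - 1/2) = cqpow q (- 2*N - 1) / cqpow q (- x - N - 1/2)"
    and "cqpow q (- 2*x - 2*N - 1) = cqpow q (- x - N - 1/2)^2"
    and "cqpow q (2*x - 2*N - 1) = (cqpow q (- 2*N - 1) / cqpow q (- x - N - 1/2))^2"
    and "cqpow q (- 2*N + 1) = complex_of_real q ^ 2 * cqpow q (- 2*N - 1)"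
    and "cqpow q (- 2*N) = complex_of_real q * cqpow q (- 2*N - 1)"
  using cqpow_diff[of q "- 2*N - 1" "- x - N - 1/2"] cqpow_add[of q "- x - N - 1/2" "- x - N - 1/2"]
    cqpow_diff[of q "2 * (- 2*N - 1)" "2 * (- x - N - 1/2)"] cqpow_add[of q "- 2*N - 1" "- 2*N - 1"]
    cqpow_add[of q 2 "- 2*N - 1"] cqpow_add[of q 1 "- 2*N - 1"]
    cqpow_of_nat[OF assms, of 2] cqpow_of_nat[OF assms, of 1]
  by (simp_all add: power2_eq_square algebra_simps power_divide)

theorem mainTheorem8:
  fixes q :: real and M n :: nat and \<alpha> x :: complex
  assumes q0: "0 < q" and q1: "q < 1"
    and M1: "1 \<le> M"
    and nle: "n \<le> M div 2"
    and h1: "\<forall>j::nat. of_real q * \<alpha> \<noteq> inverse (of_real q ^ j)"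
    and h2: "\<forall>j::nat. - (of_real q * \<alpha>) \<noteq> inverse (of_real q ^ j)"
    and h3: "\<forall>j::nat. (of_real q)\<^sup>2 * \<alpha>\<^sup>2 \<noteq> inverse (of_real q ^ j)"
  shows "(let Q = (of_real q :: complex); N = (of_real (real M / 2) :: complex) in
      phi43_term (2*n+1) (\<alpha>\<^sup>2 * Q ^ (2*n+2)) (cqpow q (- x - N - 1/2)) (- cqpow q (x - N - 1/2))
         (Q * \<alpha>) (- (Q * \<alpha>)) (cqpow q (- 2*N - 1)) Q Q
      = (cqpow q (- x - N - 1/2) - cqpow q (x - N - 1/2)) / (1 - cqpow q (- 2*N - 1))
        * phi43_term n (\<alpha>\<^sup>2 * Q ^ (2*n+3)) (cqpow q (- 2*x - 2*N - 1)) (cqpow q (2*x - 2*N - 1))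
            (Q\<^sup>2 * \<alpha>\<^sup>2) (cqpow q (- 2*N + 1)) (cqpow q (- 2*N)) (Q\<^sup>2) (Q\<^sup>2))"
proof -
  define Q N where "Q = complex_of_real q" and "N = complex_of_real (real M / 2)"
  define a c where "a = cqpow q (- x - N - 1/2)" and "c = cqpow q (- 2*N - 1)"
  have "- 2*N - 1 = - of_nat (M + 1)" by (simp add: N_def)
  then have c_real: "c = complex_of_real (inverse (q^(M + 1)))"
    unfolding c_def by (simp only: cqpow_minus_of_nat[OF q0])
  have exps: "cqpow q (x - N - 1/2) = c / a" "cqpow q (- 2*x - 2*N - 1) = a^2"
    "cqpow q (2*x - 2*N - 1) = - (- (c^2) / a^2)" "cqpow q (- 2*N + 1) = Q^2 * c" "cqpow q (- 2*N) = Q * c"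
    \<comment> \<open>the third in the shape of \<open>phi43_term_eq_racah_sum\<close> with \<open>-c\<^sup>2\<close> in place of \<open>c\<close>\<close>
    using cqpow_exponents(1-3)[OF q0, of x N] cqpow_exponents(4,5)[OF q0, of N]
    by (simp_all add: a_def c_def Q_def power_divide)
  have "(\<Sum>k\<le>2 * n + 1. racah_coeff Q (2 * n + 1) (\<alpha>^2 * Q^(2 * n + 1 + 1)) (Q * \<alpha>) (- (Q * \<alpha>)) c k
           * racah_basis Q c k a)
      = inverse (1 - c) * (\<Sum>j\<le>n. racah_coeff (Q^2) n (\<alpha>^2 * Q^(2 * n + 3)) (Q^2 * \<alpha>^2) (Q^2 * c) (Q * c) j
           * odd_racah_basis Q c j a)"
    unfolding Q_def c_real using nle h1 h2 h3 q0 q1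
    by (intro racah_sum_eq_odd_racah_sum) (auto simp: a_def cqpow_def)
  then show ?thesis
    unfolding Let_def Q_def[symmetric] N_def[symmetric] a_def[symmetric] c_def[symmetric] exps
      phi43_term_eq_racah_sum
    by (simp add: odd_racah_basis_def sum_distrib_left mult_ac diff_divide_distrib[symmetric] divide_inverse)
qed

end
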